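(* Let $K \ge 2$ and $n \ge 1$. For any pair of label assignments $\tilde\sigma, \sigma \in \{1,\ldots,K\}^n$, define the Hamming loss $H(\tilde\sigma,\sigma) = \sum_{i=1}^n I(\tilde\sigma_i \ne \sigma_i)$ and Binder's loss \[ B(\tilde\sigma,\sigma) = \sum_{1 \le i<j \le n} \Big[ I(\tilde\sigma_i \ne \tilde\sigma_j)\, I(\sigma_i = \sigma_j) + I(\tilde\sigma_i = \tilde\sigma_j)\, I(\sigma_i \ne \sigma_j) \Big]. \] Then \[ B(\tilde\sigma,\sigma) \le H(\tilde\sigma,\sigma)\Big( n - \tfrac{1}{2} H(\tilde\sigma,\sigma) \Big). \] Moreover, if $K = 2$, then $B(\tilde\sigma,\sigma) = H(\tilde\sigma,\sigma)\big(n - H(\tilde\sigma,\sigma)\big)$.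
   Context: $I(\cdot)$ denotes the indicator function. *)

theory Defs
  imports Complex_Main
begin

text \<open>Label assignments in {1..K}^n are represented as functions nat => nat,
  with positions i in {1..n} and values in {1..K}.\<close>

definition hamming_loss :: "nat \<Rightarrow> (nat \<Rightarrow> nat) \<Rightarrow> (nat \<Rightarrow> nat) \<Rightarrow> nat" where
  "hamming_loss n st s = (\<Sum>i\<in>{1..n}. if st i \<noteq> s i then 1 else 0)"

definition binder_loss :: "nat \<Rightarrow> (nat \<Rightarrow> nat) \<Rightarrow> (nat \<Rightarrow> nat) \<Rightarrow> nat" where
  "binder_loss n st s = (\<Sum>(i,j)\<in>{(i,j). 1 \<le> i \<and> i < j \<and> j \<le> n}.
      (if st i \<noteq> st j then 1 else 0) * (if s i = s j then 1 else 0)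
    + (if st i = st j then 1 else 0) * (if s i \<noteq> s j then 1 else 0))"

end

theory Submission
  imports Defs
begin

text \<open>Induction on \<open>n\<close>: appending a position \<open>j\<close> adds the pairs \<open>(i, j)\<close>, \<open>i < j\<close>. If \<open>j\<close> is
  labelled correctly, the pair \<open>(i, j)\<close> can only be discordant when \<open>i\<close> is mislabelled, so at most
  \<open>H\<close> new discordant pairs appear; otherwise at most \<open>n\<close> appear and \<open>H\<close> grows by one. Both cases
  preserve \<open>2B + H\<^sup>2 \<le> 2Hn\<close>. With two labels the same case analysis is exact: the new discordant
  pairs are exactly the mislabelled resp. correctly labelled \<open>i\<close>, which preserves \<open>B + H\<^sup>2 = Hn\<close>.\<close>

definition binder_pair_loss :: "(nat \<Rightarrow> nat) \<Rightarrow> (nat \<Rightarrow> nat) \<Rightarrow> nat \<Rightarrow> nat \<Rightarrow> nat" where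
  "binder_pair_loss st s i j = (if st i \<noteq> st j then 1 else 0) * (if s i = s j then 1 else 0)
    + (if st i = st j then 1 else 0) * (if s i \<noteq> s j then 1 else 0)"

lemma binder_pair_loss_le_one: "binder_pair_loss st s i j \<le> 1"
  by (simp add: binder_pair_loss_def)

lemma binder_pair_loss_le_mismatch:
  assumes "st j = s j"
  shows "binder_pair_loss st s i j \<le> (if st i \<noteq> s i then 1 else 0)"
  using assms by (auto simp: binder_pair_loss_def)

lemma binder_pair_loss_two_labels:
  assumes "st i \<in> {a, b}" "s i \<in> {a, b}" "st j \<in> {a, b}" "s j \<in> {a, b}"
  shows "binder_pair_loss st s i j =
    (if st j = s j then (if st i \<noteq> s i then 1 else 0) else (if st i = s i then 1 else 0))"
  using assms unfolding binder_pair_loss_def by (elim insertE emptyE) auto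

lemma binder_loss_0: "binder_loss 0 st s = 0"
  unfolding binder_loss_def by (rule sum.neutral) auto

lemma binder_loss_Suc:
  "binder_loss (Suc n) st s = binder_loss n st s + (\<Sum>i\<in>{1..n}. binder_pair_loss st s i (Suc n))"
proof -
  let ?P = "\<lambda>n. {(i, j). 1 \<le> i \<and> i < j \<and> j \<le> n}"
  let ?new = "(\<lambda>i. (i, Suc n)) ` {1..n}"
  have split: "?P (Suc n) = ?P n \<union> ?new" and disjoint: "?P n \<inter> ?new = {}"
    by auto
  have "finite (?P n)"
    by (rule finite_subset[of _ "{1..n} \<times> {1..n}"]) auto
  then have "binder_loss (Suc n) st s
      = binder_loss n st s + (\<Sum>(i, j)\<in>?new. binder_pair_loss st s i j)"
    unfolding binder_loss_def binder_pair_loss_def split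
    by (subst sum.union_disjoint) (use disjoint in auto)
  also have "(\<Sum>(i, j)\<in>?new. binder_pair_loss st s i j) = (\<Sum>i\<in>{1..n}. binder_pair_loss st s i (Suc n))"
    by (subst sum.reindex) (auto simp: inj_on_def)
  finally show ?thesis .
qed

lemma hamming_loss_0: "hamming_loss 0 st s = 0"
  by (simp add: hamming_loss_def)

lemma hamming_loss_Suc:
  "hamming_loss (Suc n) st s = hamming_loss n st s + (if st (Suc n) \<noteq> s (Suc n) then 1 else 0)"
  by (simp add: hamming_loss_def)

lemma matches_add_hamming_loss:
  "(\<Sum>i\<in>{1..n}. if st i = s i then 1 else 0) + hamming_loss n st s = n"
proof -
  have "(\<Sum>i\<in>{1..n}. if st i = s i then 1 else 0) + hamming_loss n st s = (\<Sum>i\<in>{1..n}. 1::nat)"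
    unfolding hamming_loss_def sum.distrib[symmetric] by (rule sum.cong) auto
  then show ?thesis by simp
qed

lemma binder_loss_hamming_bound:
  "2 * binder_loss n st s + (hamming_loss n st s)\<^sup>2 \<le> 2 * hamming_loss n st s * n"
proof (induction n)
  case 0
  show ?case by (simp add: binder_loss_0 hamming_loss_0)
next
  case (Suc n)
  let ?h = "hamming_loss n st s"
  let ?c = "\<Sum>i\<in>{1..n}. binder_pair_loss st s i (Suc n)"
  show ?case
  proof (cases "st (Suc n) = s (Suc n)")
    case True
    then have "?c \<le> ?h"
      unfolding hamming_loss_def by (intro sum_mono binder_pair_loss_le_mismatch)
    moreover have "2 * ?h * Suc n = 2 * ?h * n + 2 * ?h"
      by simp
    ultimately show ?thesis
      using Suc.IH True by (simp add: binder_loss_Suc hamming_loss_Suc)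
  next
    case False
    have "?c \<le> (\<Sum>i\<in>{1..n}. 1)"
      by (intro sum_mono binder_pair_loss_le_one)
    then have "?c \<le> n"
      by simp
    moreover have "(?h + 1)\<^sup>2 = ?h\<^sup>2 + 2 * ?h + 1"
      by (simp add: power2_eq_square)
    moreover have "2 * (?h + 1) * Suc n = 2 * ?h * n + 2 * ?h + 2 * n + 2"
      by simp
    ultimately show ?thesis
      using Suc.IH False by (simp add: binder_loss_Suc hamming_loss_Suc)
  qed
qed

lemma binder_loss_two_labels:
  assumes "\<forall>i\<in>{1..n}. st i \<in> {a, b} \<and> s i \<in> {a, b}"
  shows "binder_loss n st s + (hamming_loss n st s)\<^sup>2 = hamming_loss n st s * n"
  using assms
proof (induction n)
  case 0
  show ?case by (simp add: binder_loss_0 hamming_loss_0)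
next
  case (Suc n)
  let ?h = "hamming_loss n st s"
  let ?c = "\<Sum>i\<in>{1..n}. binder_pair_loss st s i (Suc n)"
  have IH: "binder_loss n st s + ?h\<^sup>2 = ?h * n"
    using Suc by simp
  have column: "?c = (\<Sum>i\<in>{1..n}. if st (Suc n) = s (Suc n)
      then (if st i \<noteq> s i then 1 else 0) else (if st i = s i then 1 else 0))"
  proof (rule sum.cong)
    fix i assume "i \<in> {1..n}"
    with Suc.prems show "binder_pair_loss st s i (Suc n) = (if st (Suc n) = s (Suc n)
        then (if st i \<noteq> s i then 1 else 0) else (if st i = s i then 1 else 0))"
      by (intro binder_pair_loss_two_labels[where a = a and b = b]) auto
  qed simp
  show ?case
  proof (cases "st (Suc n) = s (Suc n)")
    case True
    with column have "?c = ?h"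
      by (simp add: hamming_loss_def)
    moreover have "?h * Suc n = ?h * n + ?h"
      by simp
    ultimately show ?thesis
      using IH True by (simp add: binder_loss_Suc hamming_loss_Suc)
  next
    case False
    with column matches_add_hamming_loss[of st s n] have "?c + ?h = n"
      by simp
    moreover have "(?h + 1)\<^sup>2 = ?h\<^sup>2 + 2 * ?h + 1"
      by (simp add: power2_eq_square)
    moreover have "(?h + 1) * Suc n = ?h * n + ?h + n + 1"
      by simp
    ultimately show ?thesis
      using IH False by (simp add: binder_loss_Suc hamming_loss_Suc)
  qed
qed

theorem theorem3:
  fixes K n :: nat and st s :: "nat \<Rightarrow> nat"
  assumes "K \<ge> 2" and "n \<ge> 1"
    and "\<forall>i\<in>{1..n}. st i \<in> {1..K}"
    and "\<forall>i\<in>{1..n}. s i \<in> {1..K}"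
  shows "real (binder_loss n st s)
           \<le> real (hamming_loss n st s) * (real n - real (hamming_loss n st s) / 2)
         \<and> (K = 2 \<longrightarrow> real (binder_loss n st s)
           = real (hamming_loss n st s) * (real n - real (hamming_loss n st s)))"
proof
  let ?b = "real (binder_loss n st s)" and ?h = "real (hamming_loss n st s)"
  have "2 * ?b + ?h\<^sup>2 \<le> 2 * ?h * real n"
    using binder_loss_hamming_bound[of n st s, folded of_nat_le_iff[where 'a = real]]
    by (simp only: of_nat_add of_nat_mult of_nat_power of_nat_numeral)
  then show "?b \<le> ?h * (real n - ?h / 2)"
    by (simp add: power2_eq_square right_diff_distrib)
  show "K = 2 \<longrightarrow> ?b = ?h * (real n - ?h)"
  proof
    assume "K = 2"
    then have "{1..K} = {1, 2}"
      by auto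
    with assms(3,4) have "\<forall>i\<in>{1..n}. st i \<in> {1, 2} \<and> s i \<in> {1, 2}"
      by (simp only:) blast
    then have "binder_loss n st s + (hamming_loss n st s)\<^sup>2 = hamming_loss n st s * n"
      by (rule binder_loss_two_labels)
    then have "?b + ?h\<^sup>2 = ?h * real n"
      by (metis of_nat_add of_nat_mult of_nat_power)
    then show "?b = ?h * (real n - ?h)"
      by (simp add: power2_eq_square right_diff_distrib)
  qed
qed

end
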